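(* Let $n\ge2$ and let $Q\in\mathcal{Q}_n$ be meet-irreducible in $(\mathcal{Q}_n,\le)$; write $Q=Q(w)$ with $w\in S_n$. Then $Q$ is associative, i.e. $Q(i,Q(j,k))=Q(Q(i,j),k)$ for all $i,j,k\in L_n$, if and only if $w$ is a simple transposition $s_j$ (interchanging $j$ and $j+1$) for some $j\in[n-1]$.
   Context: Fix $n\ge2$, $L_n=\{0,\dots,n\}$. $\mathcal{Q}_n$ is the set of irreducible discrete quasi-copulas: maps $Q:L_n\times L_n\to L_n$ (onto) with $Q(i,0)=Q(0,i)=0$, $Q(i,n)=Q(n,i)=i$, non-decreasing in each argument, and $Q(i,j)+Q(i',j')\ge Q(i,j')+Q(i',j)$ whenever $i\le i'$, $j\le j'$ and one of $i,i',j,j'$ lies in $\{0,n\}$; it is ordered by $P\le Q$ iff $P(i,j)\le Q(i,j)$ for all $i,j$. An element $z$ of a finite poset is meet-irreducible if it is not the maximum and $z=x\wedge y$ implies $z=x$ or $z=y$. It is known that every meet-irreducible element of $\mathcal{Q}_n$ is of the form $Q(w)$, $w\in S_n$, where $Q(w)(r,s)=|\{i\le r: w(i)\le s\}|$ (and $0$ if $r=0$ or $s=0$). *)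

theory Defs
  imports "HOL-Combinatorics.Combinatorics"
begin

text \<open>Discrete quasi-copulas on L_n = {0..n}, represented as functions nat => nat => nat
  that vanish outside L_n x L_n (canonical representative).\<close>

definition irr_quasi_copula :: "nat \<Rightarrow> (nat \<Rightarrow> nat \<Rightarrow> nat) \<Rightarrow> bool" where
  "irr_quasi_copula n Q \<longleftrightarrow>
     (\<forall>i j. (i > n \<or> j > n) \<longrightarrow> Q i j = 0) \<and>
     (\<forall>i\<in>{0..n}. \<forall>j\<in>{0..n}. Q i j \<in> {0..n}) \<and>
     (\<lambda>(i,j). Q i j) ` ({0..n} \<times> {0..n}) = {0..n} \<and>
     (\<forall>i\<in>{0..n}. Q i 0 = 0 \<and> Q 0 i = 0 \<and> Q i n = i \<and> Q n i = i) \<and>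
     (\<forall>i\<in>{0..n}. \<forall>i'\<in>{0..n}. \<forall>j\<in>{0..n}. i \<le> i' \<longrightarrow> Q i j \<le> Q i' j \<and> Q j i \<le> Q j i') \<and>
     (\<forall>i\<in>{0..n}. \<forall>i'\<in>{0..n}. \<forall>j\<in>{0..n}. \<forall>j'\<in>{0..n}.
        i \<le> i' \<and> j \<le> j' \<and> ({i, i', j, j'} \<inter> {0, n} \<noteq> {}) \<longrightarrow>
        Q i j + Q i' j' \<ge> Q i j' + Q i' j)"

definition Qn :: "nat \<Rightarrow> (nat \<Rightarrow> nat \<Rightarrow> nat) set" where
  "Qn n = {Q. irr_quasi_copula n Q}"

definition qc_le :: "nat \<Rightarrow> (nat \<Rightarrow> nat \<Rightarrow> nat) \<Rightarrow> (nat \<Rightarrow> nat \<Rightarrow> nat) \<Rightarrow> bool" where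
  "qc_le n P Q \<longleftrightarrow> (\<forall>i\<in>{0..n}. \<forall>j\<in>{0..n}. P i j \<le> Q i j)"

definition is_meet :: "nat \<Rightarrow> (nat \<Rightarrow> nat \<Rightarrow> nat) \<Rightarrow> (nat \<Rightarrow> nat \<Rightarrow> nat) \<Rightarrow> (nat \<Rightarrow> nat \<Rightarrow> nat) \<Rightarrow> bool" where
  "is_meet n x y z \<longleftrightarrow> z \<in> Qn n \<and> qc_le n z x \<and> qc_le n z y \<and>
     (\<forall>u\<in>Qn n. qc_le n u x \<and> qc_le n u y \<longrightarrow> qc_le n u z)"

definition meet_irreducible :: "nat \<Rightarrow> (nat \<Rightarrow> nat \<Rightarrow> nat) \<Rightarrow> bool" where
  "meet_irreducible n z \<longleftrightarrow> z \<in> Qn n \<and> \<not> (\<forall>P\<in>Qn n. qc_le n P z) \<and>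
     (\<forall>x\<in>Qn n. \<forall>y\<in>Qn n. is_meet n x y z \<longrightarrow> z = x \<or> z = y)"

definition Qw :: "nat \<Rightarrow> (nat \<Rightarrow> nat) \<Rightarrow> nat \<Rightarrow> nat \<Rightarrow> nat" where
  "Qw n w r s = (if r \<le> n \<and> s \<le> n \<and> r \<noteq> 0 \<and> s \<noteq> 0
                 then card {i \<in> {1..r}. w i \<le> s} else 0)"

definition qc_associative :: "nat \<Rightarrow> (nat \<Rightarrow> nat \<Rightarrow> nat) \<Rightarrow> bool" where
  "qc_associative n Q \<longleftrightarrow>
     (\<forall>i\<in>{0..n}. \<forall>j\<in>{0..n}. \<forall>k\<in>{0..n}. Q i (Q j k) = Q (Q i j) k)"

end

theory Submission
  imports Defs
begin

(* A meet-irreducible Q(w) has exactly one descent: without descents w is the identity and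
   Q(w) = min is the top element, and with descents at k1 \<noteq> k2, undoing either of them raises
   Q(w) only in the corresponding row, so Q(w) is the meet of the two results.  For a
   permutation whose only descent is at k, associativity forces w(k) = k + 1 and w(k + 1) = k,
   and monotonicity on both sides of k then gives w = s_k.  Conversely Q(s_j) agrees with min
   except for the value j - 1 at (j, j), which is associative. *)

lemma permutes_atLeastAtMost_bounds:
  "w permutes {1..n} \<Longrightarrow> x \<in> {1..n} \<Longrightarrow> 1 \<le> w x \<and> w x \<le> n"
  using permutes_in_image[of w "{1..n}" x] by auto

lemma Qw_eq_card:
  assumes w: "w permutes {1..n}" and "r \<le> n" "s \<le> n"
  shows "Qw n w r s = card {x\<in>{1..r}. w x \<le> s}"
proof (cases "r \<noteq> 0 \<and> s = 0")
  case True
  then have "{x\<in>{1..r}. w x \<le> s} = {}"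
    using permutes_atLeastAtMost_bounds[OF w] \<open>r \<le> n\<close> by fastforce
  then show ?thesis by (simp add: Qw_def)
qed (use assms in \<open>auto simp: Qw_def\<close>)

lemma Qw_eq_card_image:
  assumes w: "w permutes {1..n}" and "r \<le> n" "s \<le> n"
  shows "Qw n w r s = card (w ` {1..r} \<inter> {..s})"
proof -
  have "w ` {x\<in>{1..r}. w x \<le> s} = w ` {1..r} \<inter> {..s}" by auto
  then show ?thesis
    using Qw_eq_card[OF assms] card_image[OF permutes_inj_on[OF w]] by metis
qed

lemma Qw_Suc_row:
  assumes w: "w permutes {1..n}" and "Suc r \<le> n" "s \<le> n"
  shows "Qw n w (Suc r) s = Qw n w r s + (if w (Suc r) \<le> s then 1 else 0)"
proof (cases "w (Suc r) \<le> s")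
  case True
  then have "{x\<in>{1..Suc r}. w x \<le> s} = insert (Suc r) {x\<in>{1..r}. w x \<le> s}" by auto
  then show ?thesis using True assms by (simp add: Qw_eq_card)
next
  case False
  then have "{x\<in>{1..Suc r}. w x \<le> s} = {x\<in>{1..r}. w x \<le> s}" by (auto simp: le_Suc_eq)
  then show ?thesis using False assms by (simp add: Qw_eq_card)
qed

lemma card_permutes_atMost:
  assumes w: "w permutes {1..n}" and "s \<le> n"
  shows "card {x\<in>{1..n}. w x \<le> s} = s"
proof -
  have "w ` {x\<in>{1..n}. w x \<le> s} = {1..s}"
    using permutes_image[OF w] permutes_atLeastAtMost_bounds[OF w] \<open>s \<le> n\<close> by fastforce
  then have "card {x\<in>{1..n}. w x \<le> s} = card {1..s}"
    using card_image[OF permutes_inj_on[OF w]] by metis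
  then show ?thesis by simp
qed

lemma card_prefix_split:
  assumes "i \<le> i'"
  shows "card {x\<in>{1..i'}. P x} = card {x\<in>{1..i}. P x} + card {x\<in>{Suc i..i'}. P x}"
proof -
  have "{x\<in>{1..i'}. P x} = {x\<in>{1..i}. P x} \<union> {x\<in>{Suc i..i'}. P x}"
    using assms by auto
  then show ?thesis by (simp add: card_Un_disjoint disjoint_iff)
qed

lemma Qw_le_row:
  assumes "w permutes {1..n}" "r \<le> n" "s \<le> n"
  shows "Qw n w r s \<le> r"
proof -
  have "card {x\<in>{1..r}. w x \<le> s} \<le> card {1..r}" by (rule card_mono) auto
  then show ?thesis using Qw_eq_card[OF assms] by simp
qed

lemma Qw_last_col:
  assumes w: "w permutes {1..n}" and "r \<le> n"
  shows "Qw n w r n = r"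
proof -
  have "{x\<in>{1..r}. w x \<le> n} = {1..r}"
    using permutes_atLeastAtMost_bounds[OF w] \<open>r \<le> n\<close> by auto
  then show ?thesis using Qw_eq_card[OF w] \<open>r \<le> n\<close> by simp
qed

lemma Qw_last_row:
  "w permutes {1..n} \<Longrightarrow> s \<le> n \<Longrightarrow> Qw n w n s = s"
  using Qw_eq_card[of w n n s] card_permutes_atMost[of w n s] by simp

lemma Qw_mono_row:
  assumes "w permutes {1..n}" "i \<le> i'" "i' \<le> n" "s \<le> n"
  shows "Qw n w i s \<le> Qw n w i' s"
  using Qw_eq_card[OF assms(1) _ assms(4), of i] Qw_eq_card[OF assms(1,3,4)] assms(2,3)
    card_prefix_split[OF assms(2), of "\<lambda>x. w x \<le> s"] by simp

lemma Qw_mono_col: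
  assumes "w permutes {1..n}" "r \<le> n" "j \<le> j'" "j' \<le> n"
  shows "Qw n w r j \<le> Qw n w r j'"
proof -
  have "card {x\<in>{1..r}. w x \<le> j} \<le> card {x\<in>{1..r}. w x \<le> j'}"
    by (rule card_mono) (use \<open>j \<le> j'\<close> in auto)
  then show ?thesis using Qw_eq_card[OF assms(1,2)] assms(3,4) by simp
qed

lemma Qw_2_increasing:
  assumes "w permutes {1..n}" "i \<le> i'" "i' \<le> n" "j \<le> j'" "j' \<le> n"
  shows "Qw n w i j' + Qw n w i' j \<le> Qw n w i j + Qw n w i' j'"
proof -
  have "card {x\<in>{Suc i..i'}. w x \<le> j} \<le> card {x\<in>{Suc i..i'}. w x \<le> j'}"
    by (rule card_mono) (use \<open>j \<le> j'\<close> in auto)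
  then show ?thesis
    using Qw_eq_card[OF assms(1)] assms(2-5) card_prefix_split[OF assms(2), of "\<lambda>x. w x \<le> j"]
      card_prefix_split[OF assms(2), of "\<lambda>x. w x \<le> j'"] by simp
qed

lemma Qw_in_Qn:
  assumes w: "w permutes {1..n}"
  shows "Qw n w \<in> Qn n"
proof -
  have "(\<lambda>(i, j). Qw n w i j) ` ({0..n} \<times> {0..n}) = {0..n}"
  proof
    show "(\<lambda>(i, j). Qw n w i j) ` ({0..n} \<times> {0..n}) \<subseteq> {0..n}"
      using Qw_le_row[OF w] by fastforce
    show "{0..n} \<subseteq> (\<lambda>(i, j). Qw n w i j) ` ({0..n} \<times> {0..n})"
    proof
      fix v assume "v \<in> {0..n}"
      then show "v \<in> (\<lambda>(i, j). Qw n w i j) ` ({0..n} \<times> {0..n})"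
        using Qw_last_col[OF w] by (intro rev_image_eqI[of "(v, n)"]) auto
    qed
  qed
  moreover have "\<forall>i\<in>{0..n}. \<forall>j\<in>{0..n}. Qw n w i j \<in> {0..n}"
    using Qw_le_row[OF w] by fastforce
  moreover have "\<forall>i j. (i > n \<or> j > n) \<longrightarrow> Qw n w i j = 0"
    and "\<forall>i. Qw n w i 0 = 0 \<and> Qw n w 0 i = 0"
    by (auto simp: Qw_def)
  ultimately show ?thesis
    unfolding Qn_def irr_quasi_copula_def mem_Collect_eq
    using Qw_last_col[OF w] Qw_last_row[OF w] Qw_mono_row[OF w] Qw_mono_col[OF w]
      Qw_2_increasing[OF w] by auto
qed

lemma permutes_compose_transpose_Suc:
  "w permutes {1..n} \<Longrightarrow> 1 \<le> k \<Longrightarrow> k < n \<Longrightarrow> w \<circ> transpose k (Suc k) permutes {1..n}"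
  by (rule permutes_compose[OF permutes_swap_id]) auto

lemma Qw_compose_transpose_other_row:
  assumes w: "w permutes {1..n}" and k: "1 \<le> k" "k < n" and "r \<le> n" "s \<le> n" "r \<noteq> k"
  shows "Qw n (w \<circ> transpose k (Suc k)) r s = Qw n w r s"
proof -
  have "transpose k (Suc k) ` {1..r} = {1..r}"
    by (rule transpose_image_eq) (use assms in auto)
  then have "(w \<circ> transpose k (Suc k)) ` {1..r} = w ` {1..r}" by (metis image_comp)
  then show ?thesis
    using Qw_eq_card_image[OF w] Qw_eq_card_image[OF permutes_compose_transpose_Suc[OF w k]] assms
    by simp
qed

lemma Qw_compose_transpose_row:
  assumes w: "w permutes {1..n}" and k: "1 \<le> k" "k < n" and "s \<le> n"
  shows "Qw n (w \<circ> transpose k (Suc k)) k s = Qw n w (k - 1) s + (if w (Suc k) \<le> s then 1 else 0)"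
proof -
  have Suc: "Suc (k - 1) = k" using k by simp
  show ?thesis
    using Qw_Suc_row[OF permutes_compose_transpose_Suc[OF w k], of "k - 1" s]
      Qw_compose_transpose_other_row[OF w k, of "k - 1" s] assms
    by (simp add: Suc)
qed

lemma Qw_compose_transpose_descent:
  assumes w: "w permutes {1..n}" and k: "1 \<le> k" "k < n" and desc: "w (Suc k) < w k"
  shows "qc_le n (Qw n w) (Qw n (w \<circ> transpose k (Suc k)))"
    and "Qw n w k (w (Suc k)) < Qw n (w \<circ> transpose k (Suc k)) k (w (Suc k))"
proof -
  have row: "Qw n w k s = Qw n w (k - 1) s + (if w k \<le> s then 1 else 0)" if "s \<le> n" for s
    using Qw_Suc_row[OF w, of "k - 1" s] k that by simp
  show "qc_le n (Qw n w) (Qw n (w \<circ> transpose k (Suc k)))"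
    unfolding qc_le_def
  proof (intro ballI)
    fix r s assume "r \<in> {0..n}" "s \<in> {0..n}"
    then show "Qw n w r s \<le> Qw n (w \<circ> transpose k (Suc k)) r s"
      using row Qw_compose_transpose_row[OF w k] Qw_compose_transpose_other_row[OF w k] desc
      by (cases "r = k") auto
  qed
  show "Qw n w k (w (Suc k)) < Qw n (w \<circ> transpose k (Suc k)) k (w (Suc k))"
    using row Qw_compose_transpose_row[OF w k] desc permutes_atLeastAtMost_bounds[OF w, of "Suc k"] k
    by simp
qed

lemma increasing_steps_gap:
  fixes f :: "nat \<Rightarrow> nat"
  assumes steps: "\<And>x. a \<le> x \<Longrightarrow> x < b \<Longrightarrow> f x < f (Suc x)"
    and "a \<le> x" "x \<le> y" "y \<le> b"
  shows "f x + (y - x) \<le> f y"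
  using assms(3,4)
proof (induction y)
  case (Suc y)
  show ?case
  proof (cases "x = Suc y")
    case False
    then have "x \<le> y" using Suc.prems by simp
    then show ?thesis using Suc steps[of y] \<open>a \<le> x\<close> by fastforce
  qed simp
qed simp

lemma increasing_steps_fixpoint:
  fixes f :: "nat \<Rightarrow> nat"
  assumes steps: "\<And>x. a \<le> x \<Longrightarrow> x < b \<Longrightarrow> f x < f (Suc x)"
    and "a \<le> f a" "f b \<le> b" "a \<le> x" "x \<le> b"
  shows "f x = x"
  using increasing_steps_gap[of a b f a x, OF steps] increasing_steps_gap[of a b f x b, OF steps]
    assms(2-5)
  by linarith

lemma irr_quasi_copula_le_min:
  assumes "P \<in> Qn n" "i \<le> n" "j \<le> n"
  shows "P i j \<le> min i j"
proof -
  have P: "irr_quasi_copula n P" using assms(1) by (simp add: Qn_def)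
  have mono: "\<forall>i\<in>{0..n}. \<forall>i'\<in>{0..n}. \<forall>j\<in>{0..n}. i \<le> i' \<longrightarrow> P i j \<le> P i' j \<and> P j i \<le> P j i'"
    using P unfolding irr_quasi_copula_def by (elim conjE) assumption
  have border: "\<forall>i\<in>{0..n}. P i 0 = 0 \<and> P 0 i = 0 \<and> P i n = i \<and> P n i = i"
    using P unfolding irr_quasi_copula_def by (elim conjE) assumption
  have "P i j \<le> P i n" "P i j \<le> P n j" using mono assms(2,3) by auto
  then show ?thesis using border assms(2,3) by simp
qed

lemma meet_irreducible_Qw_has_descent:
  assumes mi: "meet_irreducible n (Qw n w)" and w: "w permutes {1..n}"
  shows "\<exists>k. 1 \<le> k \<and> k < n \<and> w (Suc k) < w k"
proof (rule ccontr)
  assume "\<not> ?thesis"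
  then have "w k < w (Suc k)" if "1 \<le> k" "k < n" for k
    using that permutes_inj[OF w] by (metis inj_eq linorder_neqE_nat n_not_Suc_n)
  then have "w x = x" if "x \<in> {1..n}" for x
    using that permutes_atLeastAtMost_bounds[OF w, of 1] permutes_atLeastAtMost_bounds[OF w, of n]
    by (intro increasing_steps_fixpoint[of 1 n w]) auto
  then have "{x\<in>{1..i}. w x \<le> j} = {1..min i j}" if "i \<le> n" for i j
    using that by auto
  then have "Qw n w i j = min i j" if "i \<le> n" "j \<le> n" for i j
    using that Qw_eq_card[OF w] by simp
  then have "\<forall>P\<in>Qn n. qc_le n P (Qw n w)"
    using irr_quasi_copula_le_min by (simp add: qc_le_def)
  then show False using mi by (simp add: meet_irreducible_def)
qed

lemma meet_irreducible_Qw_descent_unique: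
  assumes mi: "meet_irreducible n (Qw n w)" and w: "w permutes {1..n}"
    and k1: "1 \<le> k1" "k1 < n" "w (Suc k1) < w k1"
    and k2: "1 \<le> k2" "k2 < n" "w (Suc k2) < w k2"
  shows "k1 = k2"
proof (rule ccontr)
  assume ne: "k1 \<noteq> k2"
  define Q1 where "Q1 = Qw n (w \<circ> transpose k1 (Suc k1))"
  define Q2 where "Q2 = Qw n (w \<circ> transpose k2 (Suc k2))"
  have "qc_le n u (Qw n w)" if "qc_le n u Q1" "qc_le n u Q2" for u
    unfolding qc_le_def
  proof (intro ballI)
    fix i j assume ij: "i \<in> {0..n}" "j \<in> {0..n}"
    show "u i j \<le> Qw n w i j"
    proof (cases "i = k1")
      case True
      have "u i j \<le> Q2 i j" using that(2) ij unfolding qc_le_def by blast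
      then show ?thesis using True ij ne Qw_compose_transpose_other_row[OF w k2(1,2), of i j]
        unfolding Q2_def by auto
    next
      case False
      have "u i j \<le> Q1 i j" using that(1) ij unfolding qc_le_def by blast
      then show ?thesis using False ij Qw_compose_transpose_other_row[OF w k1(1,2), of i j]
        unfolding Q1_def by auto
    qed
  qed
  then have "is_meet n Q1 Q2 (Qw n w)"
    using mi Qw_compose_transpose_descent(1)[OF w k1] Qw_compose_transpose_descent(1)[OF w k2]
    unfolding is_meet_def meet_irreducible_def Q1_def Q2_def by blast
  moreover have "Q1 \<in> Qn n" "Q2 \<in> Qn n"
    unfolding Q1_def Q2_def using Qw_in_Qn permutes_compose_transpose_Suc w k1 k2 by auto
  ultimately have "Qw n w = Q1 \<or> Qw n w = Q2" using mi by (auto simp: meet_irreducible_def)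
  then show False
    using Qw_compose_transpose_descent(2)[OF w k1] Qw_compose_transpose_descent(2)[OF w k2]
    unfolding Q1_def Q2_def by fastforce
qed

lemma meet_irreducible_Qw_single_descent:
  assumes mi: "meet_irreducible n (Qw n w)" and w: "w permutes {1..n}"
  obtains k where "1 \<le> k" "k < n" "w (Suc k) < w k"
    and "\<And>x. 1 \<le> x \<Longrightarrow> x < n \<Longrightarrow> x \<noteq> k \<Longrightarrow> w x < w (Suc x)"
proof -
  obtain k where k: "1 \<le> k" "k < n" "w (Suc k) < w k"
    using meet_irreducible_Qw_has_descent[OF mi w] by blast
  have "w x < w (Suc x)" if "1 \<le> x" "x < n" "x \<noteq> k" for x
    using meet_irreducible_Qw_descent_unique[OF mi w that(1,2) _ k] that permutes_inj[OF w]
    by (metis inj_eq linorder_neqE_nat n_not_Suc_n)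
  then show thesis using that k by blast
qed

context
  fixes n k :: nat and w :: "nat \<Rightarrow> nat"
  assumes w: "w permutes {1..n}"
    and k: "1 \<le> k" "k < n"
    and descent: "w (Suc k) < w k"
    and ascents: "\<And>x. 1 \<le> x \<Longrightarrow> x < n \<Longrightarrow> x \<noteq> k \<Longrightarrow> w x < w (Suc x)"
begin

lemma single_descent_left_le: "1 \<le> x \<Longrightarrow> x \<le> k \<Longrightarrow> w x \<le> w k"
  using increasing_steps_gap[of 1 k w x k] ascents k by fastforce

lemma single_descent_right_gap: "Suc k \<le> x \<Longrightarrow> x \<le> n \<Longrightarrow> w (Suc k) + (x - Suc k) \<le> w x"
  using increasing_steps_gap[of "Suc k" n w "Suc k" x] ascents by fastforce

lemma single_descent_Suc_le_top: "Suc k \<le> w k"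
proof -
  have "w ` {1..Suc k} \<subseteq> {1..w k}"
    using single_descent_left_le descent permutes_atLeastAtMost_bounds[OF w] k
    by (force simp: le_Suc_eq)
  then have "card (w ` {1..Suc k}) \<le> w k" using card_mono[of "{1..w k}"] by fastforce
  then show ?thesis using card_image[OF permutes_inj_on[OF w, of "{1..Suc k}"]] by simp
qed

text \<open>If \<open>w(k) > k + 1\<close>, associativity fails at \<open>(k + 1, k + 1, w(k + 1))\<close>.\<close>

lemma single_descent_large_top_not_associative:
  assumes large: "Suc k < w k"
  shows "\<not> qc_associative n (Qw n w)"
proof
  assume assoc: "qc_associative n (Qw n w)"
  define p where "p = w (Suc k)"
  have p: "1 \<le> p" "p \<le> n" using permutes_atLeastAtMost_bounds[OF w, of "Suc k"] k by (auto simp: p_def)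
  have "w x \<le> p \<Longrightarrow> x \<le> n \<Longrightarrow> x \<le> Suc k" for x
    using single_descent_right_gap[of x] unfolding p_def by (cases "Suc k \<le> x") auto
  then have "{x\<in>{1..Suc k}. w x \<le> p} = {x\<in>{1..n}. w x \<le> p}" using k by auto
  then have row: "Qw n w (Suc k) p = p"
    using Qw_eq_card[OF w, of "Suc k" p] card_permutes_atMost[OF w p(2)] k p by simp
  define m where "m = Qw n w (Suc k) (Suc k)"
  have "card {x\<in>{1..Suc k}. w x \<le> Suc k} \<le> card ({1..Suc k} - {k})"
    by (rule card_mono) (use large in auto)
  then have m: "m \<le> k" using Qw_eq_card[OF w, of "Suc k" "Suc k"] k unfolding m_def by simp
  have "card {x\<in>{1..m}. w x \<le> p} \<le> card ({x\<in>{1..n}. w x \<le> p} - {Suc k})"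
    by (rule card_mono) (use m k in auto)
  also have "\<dots> = p - 1"
    using card_permutes_atMost[OF w p(2)] k unfolding p_def by (subst card_Diff_singleton) auto
  finally have "Qw n w m p < p" using Qw_eq_card[OF w, of m p] m k p by simp
  moreover have "Qw n w (Suc k) (Qw n w (Suc k) p) = Qw n w m p"
    using assoc k p unfolding qc_associative_def m_def by simp
  ultimately show False using row by simp
qed

context
  assumes top: "w k = Suc k"
begin

lemma single_descent_image_prefix: "w ` {1..k} = {1..Suc k} - {w (Suc k)}"
proof (rule card_subset_eq)
  show "w ` {1..k} \<subseteq> {1..Suc k} - {w (Suc k)}"
    using single_descent_left_le permutes_atLeastAtMost_bounds[OF w] permutes_inj[OF w] top k
    by (force dest: injD)
  have "w (Suc k) \<in> {1..Suc k}"
    using permutes_atLeastAtMost_bounds[OF w, of "Suc k"] descent top k by simp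
  then show "card (w ` {1..k}) = card ({1..Suc k} - {w (Suc k)})"
    using card_image[OF permutes_inj_on[OF w, of "{1..k}"]] by simp
qed simp

text \<open>If \<open>w(k + 1) < k\<close>, associativity fails at \<open>(k, k, k)\<close>.\<close>

lemma single_descent_low_bottom_not_associative:
  assumes low: "w (Suc k) < k"
  shows "\<not> qc_associative n (Qw n w)"
proof
  assume assoc: "qc_associative n (Qw n w)"
  define p where "p = w (Suc k)"
  have p: "1 \<le> p" "p < k" using permutes_atLeastAtMost_bounds[OF w, of "Suc k"] k low by (auto simp: p_def)
  have row: "Qw n w k s = card (({1..Suc k} - {p}) \<inter> {..s})" if "s \<le> n" for s
    using Qw_eq_card_image[OF w, of k s] single_descent_image_prefix k that unfolding p_def by simp
  have "({1..Suc k} - {p}) \<inter> {..k} = {1..k} - {p}" "({1..Suc k} - {p}) \<inter> {..k - 1} = {1..k - 1} - {p}"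
    by auto
  then have kk: "Qw n w k k = k - 1" and kk1: "Qw n w k (k - 1) = k - 2"
    using row[of k] row[of "k - 1"] p k by auto
  have "Qw n w k k = Qw n w (k - 1) k"
    using Qw_Suc_row[OF w, of "k - 1" k] top k by simp
  moreover have "Qw n w k (Qw n w k k) = Qw n w (Qw n w k k) k"
    using assoc k unfolding qc_associative_def by simp
  ultimately show False using kk kk1 p by simp
qed

lemma single_descent_eq_transpose:
  assumes bottom: "w (Suc k) = k"
  shows "w = transpose k (Suc k)"
proof
  fix x
  consider "x \<notin> {1..n}" | "1 \<le> x" "x < k" | "x = k" | "x = Suc k" | "Suc k < x" "x \<le> n"
    using k by (cases "x \<in> {1..n}") (auto, linarith)
  then show "w x = transpose k (Suc k) x"
  proof cases
    case 1
    then show ?thesis using permutes_not_in[OF w] k by auto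
  next
    case 2
    have "w (k - 1) < w k" using ascents[of "k - 1"] 2 k by simp
    moreover have "w (k - 1) \<noteq> w (Suc k)" using permutes_inj[OF w] by (simp add: inj_eq)
    ultimately have "w (k - 1) \<le> k - 1" using top bottom by simp
    moreover have "1 \<le> w 1" using permutes_atLeastAtMost_bounds[OF w, of 1] k by simp
    ultimately have "w x = x"
      using increasing_steps_fixpoint[of 1 "k - 1" w x] ascents 2 k by simp
    then show ?thesis using 2 by simp
  next
    case 5
    have "w (Suc k) < w (Suc (Suc k))" using ascents[of "Suc k"] 5 by simp
    moreover have "w (Suc (Suc k)) \<noteq> w k" using permutes_inj[OF w] by (simp add: inj_eq)
    ultimately have "Suc (Suc k) \<le> w (Suc (Suc k))" using top bottom by simp
    moreover have "w n \<le> n" using permutes_atLeastAtMost_bounds[OF w, of n] k by simp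
    ultimately have "w x = x"
      using increasing_steps_fixpoint[of "Suc (Suc k)" n w x] ascents 5 by simp
    then show ?thesis using 5 by simp
  qed (use top bottom in simp_all)
qed

end

lemma single_descent_associative_imp_transpose:
  assumes "qc_associative n (Qw n w)"
  shows "w = transpose k (Suc k)"
proof -
  have top: "w k = Suc k"
    using single_descent_Suc_le_top single_descent_large_top_not_associative assms by fastforce
  moreover have "w (Suc k) = k"
    using single_descent_low_bottom_not_associative[OF top] assms descent top by fastforce
  ultimately show ?thesis using single_descent_eq_transpose by blast
qed

end

lemma Qw_transpose_Suc:
  assumes j: "1 \<le> j" "j < n" and "r \<le> n" "s \<le> n"
  shows "Qw n (transpose j (Suc j)) r s = (if r = j \<and> s = j then j - 1 else min r s)"
proof -
  have w: "transpose j (Suc j) permutes {1..n}" by (rule permutes_swap_id) (use j in auto)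
  show ?thesis
  proof (cases "r = j")
    case False
    have "transpose j (Suc j) ` {1..r} = {1..r}"
      by (rule transpose_image_eq) (use False j in auto)
    moreover have "{1..r} \<inter> {..s} = {1..min r s}" by auto
    ultimately show ?thesis using Qw_eq_card_image[OF w assms(3,4)] False by simp
  next
    case True
    have "transpose j (Suc j) ` {1..j} = insert (Suc j) {1..j - 1}"
      by (rule set_eqI) (use j in \<open>auto simp: in_transpose_image_iff transpose_def\<close>)
    moreover have "{1..j - 1} \<inter> {..s} = {1..min (j - 1) s}" by auto
    ultimately show ?thesis
      using Qw_eq_card_image[OF w assms(3,4)] True j by (cases "Suc j \<le> s") auto
  qed
qed

lemma qc_associative_Qw_transpose_Suc:
  assumes j: "1 \<le> j" "j < n"
  shows "qc_associative n (Qw n (transpose j (Suc j)))"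
  unfolding qc_associative_def
proof (intro ballI)
  define f where "f \<equiv> \<lambda>r s :: nat. if r = j \<and> s = j then j - 1 else min r s"
  have Q: "Qw n (transpose j (Suc j)) r s = f r s" and le: "f r s \<le> n"
    if "r \<le> n" "s \<le> n" for r s
    using Qw_transpose_Suc[OF j that] that unfolding f_def by auto
  have assoc: "f a (f b c) = f (f a b) c" for a b c
    using j(1) unfolding f_def by (simp add: min_def; arith)
  fix a b c assume "a \<in> {0..n}" "b \<in> {0..n}" "c \<in> {0..n}"
  then show "Qw n (transpose j (Suc j)) a (Qw n (transpose j (Suc j)) b c) =
      Qw n (transpose j (Suc j)) (Qw n (transpose j (Suc j)) a b) c"
    using Q le assoc by simp
qed

theorem mainTheorem8:
  fixes n :: nat and Q :: "nat \<Rightarrow> nat \<Rightarrow> nat" and w :: "nat \<Rightarrow> nat"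
  assumes "n \<ge> 2"
    and "meet_irreducible n Q"
    and "w permutes {1..n}"
    and "Q = Qw n w"
  shows "qc_associative n Q \<longleftrightarrow> (\<exists>j\<in>{1..n-1}. w = transpose j (j + 1))"
proof
  assume assoc: "qc_associative n Q"
  obtain k where k: "1 \<le> k" "k < n" "w (Suc k) < w k"
    and ascents: "\<And>x. 1 \<le> x \<Longrightarrow> x < n \<Longrightarrow> x \<noteq> k \<Longrightarrow> w x < w (Suc x)"
    using meet_irreducible_Qw_single_descent[of n w] assms(2-4) by blast
  have "w = transpose k (Suc k)"
    using single_descent_associative_imp_transpose[OF assms(3) k ascents] assoc assms(4) by blast
  then show "\<exists>j\<in>{1..n-1}. w = transpose j (j + 1)" using k by auto
next
  assume "\<exists>j\<in>{1..n-1}. w = transpose j (j + 1)"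
  then obtain j where "1 \<le> j" "j < n" "w = transpose j (Suc j)" by auto
  then show "qc_associative n Q" using qc_associative_Qw_transpose_Suc assms(4) by simp
qed

end
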